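(* For every basic relation $r$ of Allen's interval algebra, $\{r\}$ supports crisp $r$-constraints.
   Context: Allen's interval algebra has domain $\mathbb{I}=\{[a,b] : a,b\in\mathbb{Q},\ a<b\}$; for $I=[a,b]$ write $I^-=a$, $I^+=b$. Basic relations: $x\,\mathsf{p}\,y$ iff $x^+<y^-$; $x\,\mathsf{m}\,y$ iff $x^+=y^-$; $x\,\mathsf{o}\,y$ iff $x^-<y^-<x^+<y^+$; $x\,\mathsf{d}\,y$ iff $y^-<x^-$ and $x^+<y^+$; $x\,\mathsf{s}\,y$ iff $x^-=y^-$ and $x^+<y^+$; $x\,\mathsf{f}\,y$ iff $x^+=y^+$ and $y^-<x^-$; $x\equiv y$ iff $x=y$; inverses $\mathsf{ri}$ with $x\,\mathsf{ri}\,y$ iff $y\,\mathsf{r}\,x$ (13 relations in total). A language $\Gamma$ supports crisp $r$-constraints if for every $k\in\mathbb{N}$ one can construct a CSP instance $\mathcal{I}_r$ over $\Gamma$ (variables and binary constraints with relations from $\Gamma$) with two distinguished variables $x,y$ such that for every set $X$ of at most $k$ constraints of $\mathcal{I}_r$, the set $\{(\varphi(x),\varphi(y)) : \varphi$ is an assignment of intervals satisfying $\mathcal{I}_r$ with the constraints of $X$ removed$\}$ equals $r$. *)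

theory Defs
  imports Complex_Main
begin

type_synonym interval = "rat \<times> rat"
type_synonym irel = "(interval \<times> interval) set"

definition Ivl :: "interval set" where
  "Ivl = {I. fst I < snd I}"

abbreviation lo :: "interval \<Rightarrow> rat" where "lo I \<equiv> fst I"
abbreviation hi :: "interval \<Rightarrow> rat" where "hi I \<equiv> snd I"

definition allen_rel :: "(interval \<Rightarrow> interval \<Rightarrow> bool) \<Rightarrow> irel" where
  "allen_rel P = {(x, y). x \<in> Ivl \<and> y \<in> Ivl \<and> P x y}"

definition rel_p :: irel where "rel_p = allen_rel (\<lambda>x y. hi x < lo y)"
definition rel_m :: irel where "rel_m = allen_rel (\<lambda>x y. hi x = lo y)"
definition rel_o :: irel where
  "rel_o = allen_rel (\<lambda>x y. lo x < lo y \<and> lo y < hi x \<and> hi x < hi y)"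
definition rel_d :: irel where "rel_d = allen_rel (\<lambda>x y. lo y < lo x \<and> hi x < hi y)"
definition rel_s :: irel where "rel_s = allen_rel (\<lambda>x y. lo x = lo y \<and> hi x < hi y)"
definition rel_f :: irel where "rel_f = allen_rel (\<lambda>x y. hi x = hi y \<and> lo y < lo x)"
definition rel_eq :: irel where "rel_eq = allen_rel (\<lambda>x y. x = y)"

definition allen_basic :: "irel set" where
  "allen_basic = {rel_p, rel_m, rel_o, rel_d, rel_s, rel_f, rel_eq,
                  rel_p\<inverse>, rel_m\<inverse>, rel_o\<inverse>, rel_d\<inverse>, rel_s\<inverse>, rel_f\<inverse>}"

text \<open>A CSP instance over a language: a finite set of variables and a finite
  set of binary constraints (u, R, v) meaning (phi u, phi v) \<in> R.\<close>
type_synonym constr = "nat \<times> irel \<times> nat"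

definition is_instance :: "irel set \<Rightarrow> nat set \<Rightarrow> constr set \<Rightarrow> bool" where
  "is_instance \<Gamma> V C \<longleftrightarrow> finite V \<and> finite C \<and>
     (\<forall>(u, R, v) \<in> C. u \<in> V \<and> v \<in> V \<and> R \<in> \<Gamma>)"

definition satisfies :: "nat set \<Rightarrow> constr set \<Rightarrow> (nat \<Rightarrow> interval) \<Rightarrow> bool" where
  "satisfies V C \<phi> \<longleftrightarrow> (\<forall>v \<in> V. \<phi> v \<in> Ivl) \<and> (\<forall>(u, R, v) \<in> C. (\<phi> u, \<phi> v) \<in> R)"

definition supports_crisp :: "irel set \<Rightarrow> irel \<Rightarrow> bool" where
  "supports_crisp \<Gamma> r \<longleftrightarrow> (\<forall>k::nat. \<exists>V C x y.
     is_instance \<Gamma> V C \<and> x \<in> V \<and> y \<in> V \<and>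
     (\<forall>X. X \<subseteq> C \<longrightarrow> card X \<le> k \<longrightarrow>
        {(\<phi> x, \<phi> y) | \<phi>. satisfies V (C - X) \<phi>} = r))"

end

theory Submission
  imports Defs "HOL-Library.Disjoint_Sets" "HOL-Combinatorics.Transposition"
begin

text \<open>Each basic relation r can be expressed by constraints over r alone with the help of
  auxiliary variables: r = r O r for p, d, s, f and equality, which are transitive and dense;
  x m y iff x m z, w m z and w m y for some z, w; and x o y iff x o z o y and x o w, y o w for
  some z, w. Reversing all constraints and swapping x and y turns such a gadget for r into one for
  the converse of r. Since every constraint of a gadget mentions an auxiliary variable, k + 1 copies
  of it glued along x and y share no constraint, so deleting at most k constraints leaves one copy
  intact, which still forces r; conversely every pair in r extends to a solution of all copies.\<close>

lemma card_le_misses_disjoint_family: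
  assumes "finite X" and "card X \<le> k" and "disjoint_family_on A {..k}"
  shows "\<exists>i\<le>k. A i \<inter> X = {}"
proof (rule ccontr)
  assume "\<not> ?thesis"
  then have "\<forall>i\<in>{..k}. \<exists>x. x \<in> A i \<inter> X"
    by blast
  from bchoice[OF this] obtain f where f: "\<forall>i\<in>{..k}. f i \<in> A i \<inter> X"
    by blast
  have "inj_on f {..k}"
  proof (rule inj_onI)
    fix i j assume "i \<in> {..k}" "j \<in> {..k}" "f i = f j"
    moreover have "f i \<in> A i" "f j \<in> A j"
      using f \<open>i \<in> {..k}\<close> \<open>j \<in> {..k}\<close> by blast+
    ultimately have "A i \<inter> A j \<noteq> {}"
      by auto
    then show "i = j"
      using assms(3) \<open>i \<in> {..k}\<close> \<open>j \<in> {..k}\<close> unfolding disjoint_family_on_def by blast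
  qed
  then have "card (f ` {..k}) = Suc k"
    by (simp add: card_image)
  moreover have "card (f ` {..k}) \<le> card X"
    using f assms(1) by (intro card_mono) auto
  ultimately show False
    using assms(2) by simp
qed

definition rename :: "(nat \<Rightarrow> nat) \<Rightarrow> constr \<Rightarrow> constr" where
  "rename \<sigma> = (\<lambda>(u, R, v). (\<sigma> u, R, \<sigma> v))"

definition converse_constr :: "constr \<Rightarrow> constr" where
  "converse_constr = (\<lambda>(u, R, v). (v, R\<inverse>, u))"

lemma satisfies_mono: "satisfies V C \<phi> \<Longrightarrow> C' \<subseteq> C \<Longrightarrow> satisfies V C' \<phi>"
  unfolding satisfies_def by blast

lemma satisfies_rename_iff:
  "satisfies W (rename \<sigma> ` C) \<phi> \<longleftrightarrow>
     (\<forall>w\<in>W. \<phi> w \<in> Ivl) \<and> (\<forall>(u, R, v)\<in>C. (\<phi> (\<sigma> u), \<phi> (\<sigma> v)) \<in> R)"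
  unfolding satisfies_def rename_def by auto

text \<open>Variables 0 and 1 play the roles of x and y, all others are auxiliary.\<close>

definition gadget :: "irel set \<Rightarrow> irel \<Rightarrow> nat \<Rightarrow> constr set \<Rightarrow> bool" where
  "gadget \<Gamma> r n G \<longleftrightarrow> 2 \<le> n \<and> is_instance \<Gamma> {..<n} G \<and> (\<forall>(u, R, v)\<in>G. 2 \<le> u \<or> 2 \<le> v) \<and>
     {(\<phi> 0, \<phi> 1) | \<phi>. satisfies {..<n} G \<phi>} = r"

text \<open>Copy i of a gadget on m + 2 variables keeps 0 and 1 and moves the auxiliary variables
  2, ..., m + 1 to i * m + 2, ..., i * m + m + 1; orig_var maps every copy back.\<close>

definition copy_var :: "nat \<Rightarrow> nat \<Rightarrow> nat \<Rightarrow> nat" where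
  "copy_var m i u = (if u < 2 then u else u + i * m)"

definition orig_var :: "nat \<Rightarrow> nat \<Rightarrow> nat" where
  "orig_var m w = (if w < 2 then w else 2 + (w - 2) mod m)"

lemma copy_var_auxiliary:
  assumes "a < m"
  shows "copy_var m i (a + 2) = (a + i * m) + 2" and "(copy_var m i (a + 2) - 2) mod m = a"
    and "(copy_var m i (a + 2) - 2) div m = i"
  using assms by (simp_all add: copy_var_def)

lemma orig_var_copy_var:
  assumes "u < m + 2"
  shows "orig_var m (copy_var m i u) = u"
proof (cases "u < 2")
  case False
  then obtain a where "u = a + 2" and "a < m"
    using assms by (intro that[of "u - 2"]) auto
  then show ?thesis
    using copy_var_auxiliary[of a m i] unfolding orig_var_def by simp
qed (simp add: orig_var_def copy_var_def)

lemma copy_var_less: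
  assumes "u < m + 2" and "i \<le> k"
  shows "copy_var m i u < (k + 1) * m + 2"
proof -
  have "copy_var m i u \<le> u + i * m"
    unfolding copy_var_def by simp
  moreover have "i * m \<le> k * m"
    using assms(2) by simp
  ultimately show ?thesis
    using assms(1) unfolding distrib_right by linarith
qed

lemma orig_var_less: "w < (k + 1) * m + 2 \<Longrightarrow> orig_var m w < m + 2"
  unfolding orig_var_def by (cases "m = 0") auto

lemma copy_var_eq_imp_eq:
  assumes "copy_var m i u = copy_var m j u'" and "2 \<le> u" "u < m + 2" "u' < m + 2"
  shows "i = j"
proof -
  have "2 \<le> u'"
    using assms(1,2) unfolding copy_var_def by (auto split: if_splits)
  obtain a a' where "u = a + 2" "a < m" "u' = a' + 2" "a' < m"
    using assms(2-4) \<open>2 \<le> u'\<close> by (intro that[of "u - 2" "u' - 2"]) auto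
  then show ?thesis
    using assms(1) copy_var_auxiliary(3)[of a m i] copy_var_auxiliary(3)[of a' m j] by simp
qed

definition copies :: "nat \<Rightarrow> nat \<Rightarrow> constr set \<Rightarrow> constr set" where
  "copies m k G = (\<Union>i\<le>k. rename (copy_var m i) ` G)"

lemma is_instance_copies:
  assumes "is_instance \<Gamma> {..<m + 2} G"
  shows "is_instance \<Gamma> {..<(k + 1) * m + 2} (copies m k G)"
  using assms copy_var_less unfolding is_instance_def copies_def rename_def by fastforce

lemma disjoint_family_on_copies:
  assumes "\<forall>(u, R, v)\<in>G. u < m + 2 \<and> v < m + 2 \<and> (2 \<le> u \<or> 2 \<le> v)"
  shows "disjoint_family_on (\<lambda>i. rename (copy_var m i) ` G) I"
  unfolding disjoint_family_on_def
proof (intro ballI impI)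
  fix i j :: nat
  assume "i \<noteq> j"
  show "rename (copy_var m i) ` G \<inter> rename (copy_var m j) ` G = {}"
  proof (rule ccontr)
    assume "\<not> ?thesis"
    then obtain u R v u' R' v' where uv: "(u, R, v) \<in> G" "(u', R', v') \<in> G"
      and "copy_var m i u = copy_var m j u'" "copy_var m i v = copy_var m j v'"
      unfolding rename_def by auto
    moreover have "u < m + 2" "v < m + 2" "2 \<le> u \<or> 2 \<le> v" "u' < m + 2" "v' < m + 2"
      using assms uv by auto
    ultimately have "i = j"
      using copy_var_eq_imp_eq by blast
    with \<open>i \<noteq> j\<close> show False ..
  qed
qed

lemma satisfies_copies:
  assumes "is_instance \<Gamma> {..<m + 2} G" and "satisfies {..<m + 2} G \<psi>"
  shows "satisfies {..<(k + 1) * m + 2} (copies m k G) (\<psi> \<circ> orig_var m)"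
  using assms orig_var_less orig_var_copy_var
  unfolding is_instance_def satisfies_def copies_def rename_def by fastforce

lemma satisfies_copy:
  assumes "satisfies {..<(k + 1) * m + 2} C \<phi>" and "rename (copy_var m i) ` G \<subseteq> C" and "i \<le> k"
  shows "satisfies {..<m + 2} G (\<phi> \<circ> copy_var m i)"
  using assms copy_var_less unfolding satisfies_def rename_def by fastforce

lemma copies_diff_projection_eq:
  assumes "gadget \<Gamma> r (m + 2) G" and X: "X \<subseteq> copies m k G" "card X \<le> k"
  shows "{(\<phi> 0, \<phi> 1) | \<phi>. satisfies {..<(k + 1) * m + 2} (copies m k G - X) \<phi>} = r"
    (is "{_ | \<phi>. satisfies ?V (?C - X) \<phi>} = r")
proof -
  have inst: "is_instance \<Gamma> {..<m + 2} G"
    and aux: "\<forall>(u, R, v)\<in>G. 2 \<le> u \<or> 2 \<le> v"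
    and proj: "{(\<phi> 0, \<phi> 1) | \<phi>. satisfies {..<m + 2} G \<phi>} = r"
    using assms(1) unfolding gadget_def by auto
  show ?thesis
  proof (intro equalityI subsetI)
    fix p assume "p \<in> {(\<phi> 0, \<phi> 1) | \<phi>. satisfies ?V (?C - X) \<phi>}"
    then obtain \<phi> where p: "p = (\<phi> 0, \<phi> 1)" and sat: "satisfies ?V (?C - X) \<phi>"
      by blast
    have "finite ?C"
      using is_instance_copies[OF inst] unfolding is_instance_def by blast
    then have "finite X"
      using X(1) finite_subset by blast
    moreover have "disjoint_family_on (\<lambda>i. rename (copy_var m i) ` G) {..k}"
      using inst aux unfolding is_instance_def by (intro disjoint_family_on_copies) auto
    ultimately obtain i where "i \<le> k" "rename (copy_var m i) ` G \<inter> X = {}"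
      using card_le_misses_disjoint_family X(2) by blast
    then have "rename (copy_var m i) ` G \<subseteq> ?C - X"
      unfolding copies_def by blast
    then have "satisfies {..<m + 2} G (\<phi> \<circ> copy_var m i)"
      by (rule satisfies_copy[OF sat _ \<open>i \<le> k\<close>])
    then have "((\<phi> \<circ> copy_var m i) 0, (\<phi> \<circ> copy_var m i) 1) \<in> r"
      unfolding proj[symmetric] by blast
    then show "p \<in> r"
      using p by (simp add: copy_var_def)
  next
    fix p assume "p \<in> r"
    then obtain \<psi> where p: "p = (\<psi> 0, \<psi> 1)" and "satisfies {..<m + 2} G \<psi>"
      unfolding proj[symmetric] by blast
    then have "satisfies ?V (?C - X) (\<psi> \<circ> orig_var m)"
      using satisfies_copies[OF inst] satisfies_mono by blast
    moreover have "p = ((\<psi> \<circ> orig_var m) 0, (\<psi> \<circ> orig_var m) 1)"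
      using p by (simp add: orig_var_def)
    ultimately show "p \<in> {(\<phi> 0, \<phi> 1) | \<phi>. satisfies ?V (?C - X) \<phi>}"
      by blast
  qed
qed

lemma gadget_supports_crisp:
  assumes "gadget \<Gamma> r n G"
  shows "supports_crisp \<Gamma> r"
  unfolding supports_crisp_def
proof
  fix k
  obtain m where n: "n = m + 2"
    using assms unfolding gadget_def by (intro that[of "n - 2"]) auto
  then have "is_instance \<Gamma> {..<(k + 1) * m + 2} (copies m k G)"
    using assms is_instance_copies unfolding gadget_def by blast
  moreover have "0 \<in> {..<(k + 1) * m + 2}" "1 \<in> {..<(k + 1) * m + 2}"
    by auto
  ultimately show "\<exists>V C x y. is_instance \<Gamma> V C \<and> x \<in> V \<and> y \<in> V \<and>
      (\<forall>X. X \<subseteq> C \<longrightarrow> card X \<le> k \<longrightarrow> {(\<phi> x, \<phi> y) | \<phi>. satisfies V (C - X) \<phi>} = r)"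
    using copies_diff_projection_eq[OF assms[unfolded n]] by blast
qed

lemma gadget_converse:
  assumes "gadget \<Gamma> r n G"
  shows "gadget (converse ` \<Gamma>) (r\<inverse>) n (rename (transpose 0 1) ` converse_constr ` G)"
    (is "gadget _ _ _ ?G")
proof -
  let ?\<tau> = "transpose (0::nat) 1"
  have n: "2 \<le> n" and inst: "is_instance \<Gamma> {..<n} G"
    and aux: "\<forall>(u, R, v)\<in>G. 2 \<le> u \<or> 2 \<le> v"
    and proj: "{(\<phi> 0, \<phi> 1) | \<phi>. satisfies {..<n} G \<phi>} = r"
    using assms unfolding gadget_def by auto
  have \<tau>_less: "?\<tau> u < n \<longleftrightarrow> u < n" for u
    using n by (auto simp: transpose_def)
  have \<tau>_aux: "2 \<le> ?\<tau> u \<longleftrightarrow> 2 \<le> u" for u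
    by (auto simp: transpose_def)
  have sat: "satisfies {..<n} ?G \<phi> \<longleftrightarrow> satisfies {..<n} G (\<phi> \<circ> ?\<tau>)" for \<phi>
  proof -
    have "(\<forall>w<n. \<phi> w \<in> Ivl) \<longleftrightarrow> (\<forall>w<n. \<phi> (?\<tau> w) \<in> Ivl)"
      using \<tau>_less by (metis transpose_involutory)
    moreover have "satisfies {..<n} ?G \<phi> \<longleftrightarrow>
        (\<forall>w<n. \<phi> w \<in> Ivl) \<and> (\<forall>(u, R, v)\<in>G. (\<phi> (?\<tau> u), \<phi> (?\<tau> v)) \<in> R)"
      by (auto simp: satisfies_rename_iff converse_constr_def)
    ultimately show ?thesis
      unfolding satisfies_def by auto
  qed
  have proj': "{(\<phi> 0, \<phi> 1) | \<phi>. satisfies {..<n} ?G \<phi>} = r\<inverse>"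
  proof (intro equalityI subsetI)
    fix p assume "p \<in> {(\<phi> 0, \<phi> 1) | \<phi>. satisfies {..<n} ?G \<phi>}"
    then obtain \<phi> where p: "p = (\<phi> 0, \<phi> 1)" and "satisfies {..<n} G (\<phi> \<circ> ?\<tau>)"
      using sat by blast
    then have "((\<phi> \<circ> ?\<tau>) 0, (\<phi> \<circ> ?\<tau>) 1) \<in> r"
      using proj by blast
    then show "p \<in> r\<inverse>"
      using p by simp
  next
    fix p assume "p \<in> r\<inverse>"
    then obtain \<psi> where p: "p = (\<psi> 1, \<psi> 0)" and "satisfies {..<n} G \<psi>"
      using proj by blast
    moreover have "\<psi> \<circ> ?\<tau> \<circ> ?\<tau> = \<psi>"
      by (simp add: comp_assoc)
    ultimately have "satisfies {..<n} ?G (\<psi> \<circ> ?\<tau>)"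
      using sat by metis
    moreover have "p = ((\<psi> \<circ> ?\<tau>) 0, (\<psi> \<circ> ?\<tau>) 1)"
      using p by simp
    ultimately show "p \<in> {(\<phi> 0, \<phi> 1) | \<phi>. satisfies {..<n} ?G \<phi>}"
      by blast
  qed
  have inst': "is_instance (converse ` \<Gamma>) {..<n} ?G"
    using inst \<tau>_less unfolding is_instance_def rename_def converse_constr_def by auto
  have aux': "\<forall>(u, R, v)\<in>?G. 2 \<le> u \<or> 2 \<le> v"
    using aux \<tau>_aux unfolding rename_def converse_constr_def by auto
  show ?thesis
    unfolding gadget_def by (intro conjI n inst' aux' proj')
qed

lemma gadgetI:
  assumes "2 \<le> n" and "finite G" and "\<forall>(u, R, v)\<in>G. R = r \<and> u < n \<and> v < n \<and> (2 \<le> u \<or> 2 \<le> v)"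
    and "\<And>\<phi>. satisfies {..<n} G \<phi> \<Longrightarrow> (\<phi> 0, \<phi> 1) \<in> r"
    and "\<And>a b. (a, b) \<in> r \<Longrightarrow> \<exists>\<phi>. satisfies {..<n} G \<phi> \<and> \<phi> 0 = a \<and> \<phi> 1 = b"
  shows "gadget {r} r n G"
proof -
  have inst: "is_instance {r} {..<n} G"
    using assms(2,3) unfolding is_instance_def by auto
  have aux: "\<forall>(u, R, v)\<in>G. 2 \<le> u \<or> 2 \<le> v"
    using assms(3) by auto
  have proj: "{(\<phi> 0, \<phi> 1) | \<phi>. satisfies {..<n} G \<phi>} = r"
  proof (intro equalityI subsetI)
    fix p assume "p \<in> {(\<phi> 0, \<phi> 1) | \<phi>. satisfies {..<n} G \<phi>}"
    then show "p \<in> r"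
      using assms(4) by blast
  next
    fix p assume "p \<in> r"
    then show "p \<in> {(\<phi> 0, \<phi> 1) | \<phi>. satisfies {..<n} G \<phi>}"
      using assms(5)[of "fst p" "snd p"] by force
  qed
  show ?thesis
    unfolding gadget_def by (intro conjI assms(1) inst aux proj)
qed

lemma gadget_chain:
  assumes "r \<subseteq> Ivl \<times> Ivl" and "r O r = r"
  shows "gadget {r} r 3 {(0, r, 2), (2, r, 1)}"
proof (rule gadgetI)
  fix \<phi> assume "satisfies {..<3} {(0, r, 2), (2, r, 1)} \<phi>"
  then have "(\<phi> 0, \<phi> 2) \<in> r" "(\<phi> 2, \<phi> 1) \<in> r"
    unfolding satisfies_def by auto
  then have "(\<phi> 0, \<phi> 1) \<in> r O r"
    by (rule relcompI)
  then show "(\<phi> 0, \<phi> 1) \<in> r"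
    using assms(2) by simp
next
  fix a b assume "(a, b) \<in> r"
  then have "(a, b) \<in> r O r"
    using assms(2) by simp
  then obtain c where ac: "(a, c) \<in> r" and cb: "(c, b) \<in> r"
    by (rule relcompEpair)
  moreover have "a \<in> Ivl" "b \<in> Ivl" "c \<in> Ivl"
    using assms(1) ac cb by blast+
  ultimately have "satisfies {..<3} {(0, r, 2), (2, r, 1)} (\<lambda>i. [a, b, c] ! i)"
    by (auto simp: satisfies_def less_Suc_eq numeral_eq_Suc)
  then show "\<exists>\<phi>. satisfies {..<3} {(0, r, 2), (2, r, 1)} \<phi> \<and> \<phi> 0 = a \<and> \<phi> 1 = b"
    by (intro exI[of _ "\<lambda>i. [a, b, c] ! i"]) simp
qed auto

lemma allen_rel_subset_Ivl: "allen_rel P \<subseteq> Ivl \<times> Ivl"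
  unfolding allen_rel_def by auto

lemma allen_rel_relcomp_self:
  assumes "\<And>x y z. x \<in> Ivl \<Longrightarrow> y \<in> Ivl \<Longrightarrow> z \<in> Ivl \<Longrightarrow> P x y \<Longrightarrow> P y z \<Longrightarrow> P x z"
    and "\<And>x y. x \<in> Ivl \<Longrightarrow> y \<in> Ivl \<Longrightarrow> P x y \<Longrightarrow> \<exists>z\<in>Ivl. P x z \<and> P z y"
  shows "allen_rel P O allen_rel P = allen_rel P"
  using assms unfolding allen_rel_def by blast

lemma rel_p_relcomp_self: "rel_p O rel_p = rel_p"
  unfolding rel_p_def
proof (rule allen_rel_relcomp_self)
  fix x y :: interval
  assume "x \<in> Ivl" "y \<in> Ivl" "hi x < lo y"
  then show "\<exists>z\<in>Ivl. hi x < lo z \<and> hi z < lo y"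
    by (intro bexI[of _ "((2 * hi x + lo y) / 3, (hi x + 2 * lo y) / 3)"]) (auto simp: Ivl_def field_simps)
qed (auto simp: Ivl_def)

lemma rel_d_relcomp_self: "rel_d O rel_d = rel_d"
  unfolding rel_d_def
proof (rule allen_rel_relcomp_self)
  fix x y :: interval
  assume "x \<in> Ivl" "y \<in> Ivl" "lo y < lo x \<and> hi x < hi y"
  then show "\<exists>z\<in>Ivl. (lo z < lo x \<and> hi x < hi z) \<and> lo y < lo z \<and> hi z < hi y"
    by (intro bexI[of _ "((lo x + lo y) / 2, (hi x + hi y) / 2)"]) (auto simp: Ivl_def field_simps)
qed auto

lemma rel_s_relcomp_self: "rel_s O rel_s = rel_s"
  unfolding rel_s_def
proof (rule allen_rel_relcomp_self)
  fix x y :: interval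
  assume "x \<in> Ivl" "y \<in> Ivl" "lo x = lo y \<and> hi x < hi y"
  then show "\<exists>z\<in>Ivl. (lo x = lo z \<and> hi x < hi z) \<and> lo z = lo y \<and> hi z < hi y"
    by (intro bexI[of _ "(lo x, (hi x + hi y) / 2)"]) (auto simp: Ivl_def field_simps)
qed auto

lemma rel_f_relcomp_self: "rel_f O rel_f = rel_f"
  unfolding rel_f_def
proof (rule allen_rel_relcomp_self)
  fix x y :: interval
  assume "x \<in> Ivl" "y \<in> Ivl" "hi x = hi y \<and> lo y < lo x"
  then show "\<exists>z\<in>Ivl. (hi x = hi z \<and> lo z < lo x) \<and> hi z = hi y \<and> lo y < lo z"
    by (intro bexI[of _ "((lo x + lo y) / 2, hi x)"]) (auto simp: Ivl_def field_simps)
qed auto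

lemma rel_eq_relcomp_self: "rel_eq O rel_eq = rel_eq"
  unfolding rel_eq_def by (rule allen_rel_relcomp_self) auto

lemma gadget_meets: "gadget {rel_m} rel_m 4 {(0, rel_m, 2), (3, rel_m, 2), (3, rel_m, 1)}"
  (is "gadget _ _ _ ?G")
proof (rule gadgetI)
  fix \<phi> assume "satisfies {..<4} ?G \<phi>"
  then show "(\<phi> 0, \<phi> 1) \<in> rel_m"
    by (auto simp: satisfies_def rel_m_def allen_rel_def)
next
  fix a b assume "(a, b) \<in> rel_m"
  then have "satisfies {..<4} ?G (\<lambda>i. [a, b, b, a] ! i)"
    by (auto simp: satisfies_def rel_m_def allen_rel_def less_Suc_eq numeral_eq_Suc)
  then show "\<exists>\<phi>. satisfies {..<4} ?G \<phi> \<and> \<phi> 0 = a \<and> \<phi> 1 = b"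
    by (intro exI[of _ "\<lambda>i. [a, b, b, a] ! i"]) simp
qed auto

lemma gadget_overlaps:
  "gadget {rel_o} rel_o 4 {(0, rel_o, 2), (2, rel_o, 1), (0, rel_o, 3), (1, rel_o, 3)}"
  (is "gadget _ _ _ ?G")
proof (rule gadgetI)
  fix \<phi> assume "satisfies {..<4} ?G \<phi>"
  then show "(\<phi> 0, \<phi> 1) \<in> rel_o"
    by (auto simp: satisfies_def rel_o_def allen_rel_def)
next
  fix a b assume "(a, b) \<in> rel_o"
  define z w where "z = ((lo a + lo b) / 2, (hi a + hi b) / 2)" and "w = ((lo b + hi a) / 2, hi b + 1)"
  have "satisfies {..<4} ?G (\<lambda>i. [a, b, z, w] ! i)"
    using \<open>(a, b) \<in> rel_o\<close> unfolding z_def w_def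
    by (auto simp: satisfies_def rel_o_def allen_rel_def Ivl_def field_simps less_Suc_eq numeral_eq_Suc)
  then show "\<exists>\<phi>. satisfies {..<4} ?G \<phi> \<and> \<phi> 0 = a \<and> \<phi> 1 = b"
    by (intro exI[of _ "\<lambda>i. [a, b, z, w] ! i"]) simp
qed auto

theorem mainTheorem8:
  assumes "r \<in> allen_basic"
  shows "supports_crisp {r} r"
proof -
  have crisp: "supports_crisp {s} s" "supports_crisp {s\<inverse>} (s\<inverse>)" if "gadget {s} s n G" for s n G
    using gadget_supports_crisp[OF that] gadget_supports_crisp[OF gadget_converse[OF that]] by simp_all
  have in_Ivl: "rel_p \<subseteq> Ivl \<times> Ivl" "rel_d \<subseteq> Ivl \<times> Ivl" "rel_s \<subseteq> Ivl \<times> Ivl"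
    "rel_f \<subseteq> Ivl \<times> Ivl" "rel_eq \<subseteq> Ivl \<times> Ivl"
    unfolding rel_p_def rel_d_def rel_s_def rel_f_def rel_eq_def by (fact allen_rel_subset_Ivl)+
  note gadgets = gadget_chain[OF in_Ivl(1) rel_p_relcomp_self] gadget_meets gadget_overlaps
    gadget_chain[OF in_Ivl(2) rel_d_relcomp_self] gadget_chain[OF in_Ivl(3) rel_s_relcomp_self]
    gadget_chain[OF in_Ivl(4) rel_f_relcomp_self] gadget_chain[OF in_Ivl(5) rel_eq_relcomp_self]
  show ?thesis
    using assms unfolding allen_basic_def
    by (elim insertE emptyE) (simp_all add: gadgets[THEN crisp(1)] gadgets[THEN crisp(2)])
qed

end
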